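(* Let $m,n$ be positive integers and $\alpha\in\mathbb{R}$. Consider the scalar equation $\partial_tu+u^m\partial_xu^n=0$, rewritten as $\partial_tu+\partial_x(u^{m+n})-u^n\partial_x(u^m)=0$, with entropy pair $U(u)=u^2/2$, $F(u)=\frac{n}{m+n+1}u^{m+n+1}$, and the semi-discretization on a uniform grid of spacing $\Delta x$ $$\partial_tu_i+\frac{f^{\mathrm{num}}_{i+1/2}-f^{\mathrm{num}}_{i-1/2}}{\Delta x}-\alpha\frac{h^{\mathrm{num}}_{i+1/2}[\![u^m]\!]_{i+1/2}+h^{\mathrm{num}}_{i-1/2}[\![u^m]\!]_{i-1/2}}{2\Delta x}-(1-\alpha)\frac{u_i^n[\![u^m]\!]_{i+1/2}+u_i^n[\![u^m]\!]_{i-1/2}}{2\Delta x}=0,$$ where $h^{\mathrm{num}}\colon\mathbb{R}^2\to\mathbb{R}$ is any symmetric function with $h^{\mathrm{num}}(u,u)=u^n$, subscripts $i+1/2$ mean evaluation at $(u_-,u_+)=(u_i,u_{i+1})$, and $$f^{\mathrm{num}}(u_-,u_+)=\frac{m+1}{m+n+1}\sum_{k=0}^{m+n}u_+^{m+n-k}u_-^k-\alpha\{\{u\}\}h^{\mathrm{num}}\sum_{k=0}^{m-1}u_+^{m-1-k}u_-^k-(1-\alpha)\{\{u^{n+1}\}\}\sum_{k=0}^{m-1}u_+^{m-1-k}u_-^k.$$ Then this semi-discretization is entropy-conservative for $U=u^2/2$.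
   Context: For a function $a$ and states $u_\pm$: $\{\{a\}\}=\tfrac12(a(u_-)+a(u_+))$, $[\![a]\!]=a(u_+)-a(u_-)$. Entropy-conservative for $(U,F)$ means: there exists $F^{\mathrm{num}}\colon\mathbb{R}^2\to\mathbb{R}$ with $F^{\mathrm{num}}(u,u)=F(u)$ such that for all grid states and all $i$, $U'(u_i)\,\partial_tu_i=-\frac{1}{\Delta x}(F^{\mathrm{num}}(u_i,u_{i+1})-F^{\mathrm{num}}(u_{i-1},u_i))$, with $\partial_tu_i$ given by the scheme. *)

theory Defs
  imports "HOL-Analysis.Analysis"
begin

definition avg :: "(real \<Rightarrow> real) \<Rightarrow> real \<Rightarrow> real \<Rightarrow> real" where
  "avg a um up = (a um + a up) / 2"

definition jump :: "(real \<Rightarrow> real) \<Rightarrow> real \<Rightarrow> real \<Rightarrow> real" where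
  "jump a um up = a up - a um"

definition fnum :: "nat \<Rightarrow> nat \<Rightarrow> real \<Rightarrow> (real \<Rightarrow> real \<Rightarrow> real) \<Rightarrow> real \<Rightarrow> real \<Rightarrow> real" where
  "fnum m n \<alpha> h um up =
     (real m + 1) / (real m + real n + 1) * (\<Sum>k=0..m+n. up ^ (m + n - k) * um ^ k)
     - \<alpha> * avg (\<lambda>v. v) um up * h um up * (\<Sum>k=0..m-1. up ^ (m - 1 - k) * um ^ k)
     - (1 - \<alpha>) * avg (\<lambda>v. v ^ (n + 1)) um up * (\<Sum>k=0..m-1. up ^ (m - 1 - k) * um ^ k)"

definition scheme_rhs :: "nat \<Rightarrow> nat \<Rightarrow> real \<Rightarrow> (real \<Rightarrow> real \<Rightarrow> real) \<Rightarrow> real \<Rightarrow> (int \<Rightarrow> real) \<Rightarrow> int \<Rightarrow> real" where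
  "scheme_rhs m n \<alpha> h dx u i =
     - ( (fnum m n \<alpha> h (u i) (u (i+1)) - fnum m n \<alpha> h (u (i-1)) (u i)) / dx
       - \<alpha> * (h (u i) (u (i+1)) * jump (\<lambda>v. v ^ m) (u i) (u (i+1))
              + h (u (i-1)) (u i) * jump (\<lambda>v. v ^ m) (u (i-1)) (u i)) / (2 * dx)
       - (1 - \<alpha>) * ((u i) ^ n * jump (\<lambda>v. v ^ m) (u i) (u (i+1))
              + (u i) ^ n * jump (\<lambda>v. v ^ m) (u (i-1)) (u i)) / (2 * dx))"

definition entropy_conservative ::
  "(real \<Rightarrow> real) \<Rightarrow> (real \<Rightarrow> real) \<Rightarrow> real \<Rightarrow> ((int \<Rightarrow> real) \<Rightarrow> int \<Rightarrow> real) \<Rightarrow> bool" where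
  "entropy_conservative U F dx dt \<longleftrightarrow>
     (\<exists>Fnum :: real \<Rightarrow> real \<Rightarrow> real. (\<forall>v. Fnum v v = F v) \<and>
        (\<forall>u :: int \<Rightarrow> real. \<forall>i. deriv U (u i) * dt u i
            = - (1 / dx) * (Fnum (u i) (u (i+1)) - Fnum (u (i-1)) (u i))))"

end

theory Submission
  imports Defs
begin

text \<open>Write the scheme in fluctuation form: the interface \<open>(a, b)\<close> contributes
  \<open>fluct_left a b\<close> to the cell of \<open>a\<close> and \<open>fluct_right a b\<close> to the cell of \<open>b\<close>.
  For \<open>U = u\<^sup>2/2\<close> the scheme is entropy-conservative as soon as the entropy production
  \<open>a * fluct_left a b + b * fluct_right a b\<close> of a single interface is a difference
  \<open>\<phi> b - \<phi> a\<close>, because these differences telescope. Multiplying the numerical flux by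
  \<open>[[u]]\<close> turns its divided differences into jumps, and the non-conservative products
  cancel against the averaged ones, leaving \<open>\<phi> v = -(m+1)/(m+n+1) * v ^ (m+n+1)\<close>.\<close>

lemma diff_mult_sum_power:
  fixes a b :: "'a :: comm_ring_1"
  shows "(b - a) * (\<Sum>k=0..M. b ^ (M - k) * a ^ k) = b ^ Suc M - a ^ Suc M"
proof -
  have "a ^ Suc M - b ^ Suc M = (a - b) * (\<Sum>k<Suc M. a ^ k * b ^ (M - k))"
    by (rule diff_power_eq_sum)
  moreover have "{0..M} = {..<Suc M}"
    by auto
  ultimately show ?thesis
    by (simp add: algebra_simps)
qed

lemma sum_power_diag:
  fixes v :: "'a :: comm_semiring_1"
  shows "(\<Sum>k=0..M. v ^ (M - k) * v ^ k) = of_nat (Suc M) * v ^ M"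
proof -
  have "(\<Sum>k=0..M. v ^ (M - k) * v ^ k) = (\<Sum>k=0..M. v ^ M)"
    by (rule sum.cong) (auto simp: power_add[symmetric])
  then show ?thesis
    by simp
qed

lemma deriv_half_square: "deriv (\<lambda>v. v\<^sup>2 / 2) w = (w :: real)"
  by (rule DERIV_imp_deriv) (auto intro!: derivative_eq_intros)

lemma entropy_conservative_fluctuation_form:
  fixes L R :: "real \<Rightarrow> real \<Rightarrow> real"
  assumes balance: "\<And>a b. deriv U a * L a b + deriv U b * R a b = \<phi> b - \<phi> a"
    and consistent: "\<And>v. deriv U v * L v v + \<phi> v = F v"
  shows "entropy_conservative U F dx (\<lambda>u i. - (L (u i) (u (i+1)) + R (u (i-1)) (u i)) / dx)"
  unfolding entropy_conservative_def
proof (intro exI[of _ "\<lambda>a b. deriv U a * L a b + \<phi> a"] conjI allI)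
  show "deriv U v * L v v + \<phi> v = F v" for v
    by (rule consistent)
next
  fix u :: "int \<Rightarrow> real" and i :: int
  have flux_difference: "deriv U (u i) * L (u i) (u (i+1)) + \<phi> (u i)
        - (deriv U (u (i-1)) * L (u (i-1)) (u i) + \<phi> (u (i-1)))
      = deriv U (u i) * (L (u i) (u (i+1)) + R (u (i-1)) (u i))"
    using balance[of "u (i-1)" "u i"] by (simp add: algebra_simps)
  show "deriv U (u i) * (- (L (u i) (u (i+1)) + R (u (i-1)) (u i)) / dx)
      = - (1 / dx) * (deriv U (u i) * L (u i) (u (i+1)) + \<phi> (u i)
          - (deriv U (u (i-1)) * L (u (i-1)) (u i) + \<phi> (u (i-1))))"
    unfolding flux_difference by (simp add: divide_inverse algebra_simps)
qed

lemma jump_mult_fnum: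
  assumes "m \<ge> 1"
  shows "(b - a) * fnum m n \<alpha> h a b
    = (real m + 1) / (real m + real n + 1) * (b ^ (m + n + 1) - a ^ (m + n + 1))
      - \<alpha> * avg (\<lambda>v. v) a b * h a b * jump (\<lambda>v. v ^ m) a b
      - (1 - \<alpha>) * avg (\<lambda>v. v ^ (n + 1)) a b * jump (\<lambda>v. v ^ m) a b"
proof -
  define c where "c = (real m + 1) / (real m + real n + 1)"
  define P where "P = (\<Sum>k=0..m+n. b ^ (m + n - k) * a ^ k)"
  define Q where "Q = (\<Sum>k=0..m-1. b ^ (m - 1 - k) * a ^ k)"
  have "(b - a) * Q = jump (\<lambda>v. v ^ m) a b"
    using diff_mult_sum_power[of b a "m - 1"] assms by (simp add: Q_def jump_def)
  moreover have "(b - a) * P = b ^ (m + n + 1) - a ^ (m + n + 1)"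
    using diff_mult_sum_power[of b a "m + n"] by (simp add: P_def)
  moreover have "(b - a) * fnum m n \<alpha> h a b
      = c * ((b - a) * P)
        - \<alpha> * avg (\<lambda>v. v) a b * h a b * ((b - a) * Q)
        - (1 - \<alpha>) * avg (\<lambda>v. v ^ (n + 1)) a b * ((b - a) * Q)"
    unfolding fnum_def P_def Q_def c_def[symmetric] by (simp add: algebra_simps)
  ultimately show ?thesis
    unfolding c_def by simp
qed

lemma fnum_diag:
  assumes "m \<ge> 1" and "h v v = v ^ n"
  shows "fnum m n \<alpha> h v v = v ^ (m + n)"
proof -
  obtain k where k: "m = Suc k"
    using assms(1) by (cases m) auto
  have "(\<Sum>j=0..m+n. v ^ (m + n - j) * v ^ j) = (real m + real n + 1) * v ^ (m + n)"
    using sum_power_diag[of v "m + n"] by simp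
  moreover have "(\<Sum>j=0..m-1. v ^ (m - 1 - j) * v ^ j) = real m * v ^ (m - 1)"
    using sum_power_diag[of v "m - 1"] k by simp
  moreover have "real m + real n + 1 \<noteq> 0"
    by linarith
  ultimately show ?thesis
    unfolding fnum_def avg_def assms(2) k by (simp add: field_simps power_add)
qed

definition fluct_left :: "nat \<Rightarrow> nat \<Rightarrow> real \<Rightarrow> (real \<Rightarrow> real \<Rightarrow> real) \<Rightarrow> real \<Rightarrow> real \<Rightarrow> real" where
  "fluct_left m n \<alpha> h a b =
     fnum m n \<alpha> h a b - (\<alpha> * h a b + (1 - \<alpha>) * a ^ n) * jump (\<lambda>v. v ^ m) a b / 2"

definition fluct_right :: "nat \<Rightarrow> nat \<Rightarrow> real \<Rightarrow> (real \<Rightarrow> real \<Rightarrow> real) \<Rightarrow> real \<Rightarrow> real \<Rightarrow> real" where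
  "fluct_right m n \<alpha> h a b =
     - fnum m n \<alpha> h a b - (\<alpha> * h a b + (1 - \<alpha>) * b ^ n) * jump (\<lambda>v. v ^ m) a b / 2"

lemma scheme_rhs_fluctuation_form:
  "scheme_rhs m n \<alpha> h dx
     = (\<lambda>u i. - (fluct_left m n \<alpha> h (u i) (u (i+1)) + fluct_right m n \<alpha> h (u (i-1)) (u i)) / dx)"
  unfolding scheme_rhs_def fluct_left_def fluct_right_def
  by (intro ext) (simp add: divide_simps algebra_simps)

lemma fluct_entropy_balance:
  assumes "m \<ge> 1"
  shows "a * fluct_left m n \<alpha> h a b + b * fluct_right m n \<alpha> h a b
    = (real m + 1) / (real m + real n + 1) * (a ^ (m + n + 1) - b ^ (m + n + 1))"
proof -
  have "a * fluct_left m n \<alpha> h a b + b * fluct_right m n \<alpha> h a b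
      = - ((b - a) * fnum m n \<alpha> h a b)
        - \<alpha> * avg (\<lambda>v. v) a b * h a b * jump (\<lambda>v. v ^ m) a b
        - (1 - \<alpha>) * avg (\<lambda>v. v ^ (n + 1)) a b * jump (\<lambda>v. v ^ m) a b"
    unfolding fluct_left_def fluct_right_def avg_def by (simp add: field_simps)
  then show ?thesis
    unfolding jump_mult_fnum[OF assms] by (simp add: right_diff_distrib)
qed

theorem mainTheorem8:
  fixes m n :: nat and \<alpha> dx :: real and h :: "real \<Rightarrow> real \<Rightarrow> real"
  assumes "m \<ge> 1" and "n \<ge> 1" and "dx > 0"
    and "\<And>a b. h a b = h b a"
    and "\<And>v. h v v = v ^ n"
  shows "entropy_conservative (\<lambda>v. v\<^sup>2 / 2)
           (\<lambda>v. real n / (real m + real n + 1) * v ^ (m + n + 1))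
           dx (scheme_rhs m n \<alpha> h dx)"
proof -
  define c where "c = (real m + 1) / (real m + real n + 1)"
  have balance: "a * fluct_left m n \<alpha> h a b + b * fluct_right m n \<alpha> h a b
      = - c * b ^ (m + n + 1) - - c * a ^ (m + n + 1)" for a b
    unfolding fluct_entropy_balance[OF assms(1)] c_def[symmetric] by (simp add: algebra_simps)
  have "real m + real n + 1 \<noteq> 0"
    by linarith
  then have consistent: "v * fluct_left m n \<alpha> h v v + - c * v ^ (m + n + 1)
      = real n / (real m + real n + 1) * v ^ (m + n + 1)" for v
    unfolding fluct_left_def fnum_diag[OF assms(1) assms(5)] jump_def c_def
    by (simp add: field_simps)
  have "entropy_conservative (\<lambda>v. v\<^sup>2 / 2)
      (\<lambda>v. real n / (real m + real n + 1) * v ^ (m + n + 1)) dx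
      (\<lambda>u i. - (fluct_left m n \<alpha> h (u i) (u (i+1)) + fluct_right m n \<alpha> h (u (i-1)) (u i)) / dx)"
    by (rule entropy_conservative_fluctuation_form[where \<phi> = "\<lambda>v. - c * v ^ (m + n + 1)"])
      (unfold deriv_half_square, rule balance, rule consistent)
  then show ?thesis
    unfolding scheme_rhs_fluctuation_form .
qed

end
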